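(* Let $\mathcal{S}=(\mathcal{T},\mathcal{M},\Sigma)$ be an OBDA specification, $q$ a conjunctive query, $C$ a cover of $q$, and $q_C(\vec x)\leftarrow\bigwedge_{f\in C}q^{\mathrm{ucq}}_{|f}(\vec x_f)$ a cover-based JUCQ perfect rewriting of $q$ with respect to $\mathcal{T}$ and $C$. Then the optimized unfolding $\mathrm{unf}_{\mathrm{opt}}(q_C,\mathcal{M})$ is an $\mathcal{M}$-translation of $q_C$, i.e. $\mathrm{unf}_{\mathrm{opt}}(q_C,\mathcal{M})^{\mathcal{D}}=q_C^{\mathcal{A}_{(\mathcal{M},\mathcal{D})}}$ for every database instance $\mathcal{D}$ of $\Sigma$.
   Context: An OBDA specification consists of a DL-Lite$_\mathcal{R}$ TBox $\mathcal{T}$, a relational schema $\Sigma$, and a set $\mathcal{M}$ of mappings $L(\vec t)\leftsquigarrow V(\vec x)$ ($L$ a concept/role name, $\vec t$ a tuple of terms over $\vec x$ built from function symbols or variables, $V$ a view name with extension $V^{\mathcal{D}}$ given by a query over $\Sigma$, possibly a non-recursive Datalog query with function symbols). The virtual ABox is $\mathcal{A}_{(\mathcal{M},\mathcal{D})}=\{L(\vec t[\vec x\mapsto\vec a])\mid L(\vec t)\leftsquigarrow V(\vec x)\in\mathcal{M},\ \vec a\in V^{\mathcal{D}}\}$. A query $q_t$ is an $\mathcal{M}$-translation of $q'$ if $q_t^{\mathcal{D}}=q'^{\mathcal{A}_{(\mathcal{M},\mathcal{D})}}$ for every instance $\mathcal{D}$. A perfect rewriting $q_r$ of $q'$ w.r.t.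 $\mathcal{T}$ satisfies $\mathrm{cert}(q',(\mathcal{T},\mathcal{A}))=q_r^{\mathcal{A}}$ for all ABoxes $\mathcal{A}$. Unfolding of a CQ $q(\vec x)\leftarrow L_1(\vec v_1),\dots,L_n(\vec v_n)$: the Datalog query $(q_{\mathrm{unf}}(\vec x),\Pi)$ with $\Pi$ a minimal set of rules containing, for every tuple $(m_1,\dots,m_n)$ of mappings with $m_i=L_i(\vec f_i(\vec x_i))\leftsquigarrow V_i(\vec z_i)$ and every mgu $\sigma$ of $\{(L_i(\vec v_i),L_i(\vec f_i(\vec x_i)))\}$, the rule $q_{\mathrm{unf}}(\sigma(\vec x))\leftarrow V_1(\sigma(\vec z_1)),\dots,V_n(\sigma(\vec z_n))$; UCQs are unfolded CQ-wise. Cover: a collection $C$ of nonempty subsets (fragments) of the atom set of $q$ covering it, none included in another; fragment query $q_{|f}(\vec x_f)$ has the atoms of $f$ and answer variables the answer variables of $q$ in $f$ plus existential variables shared with another fragment; $q^{\mathrm{ucq}}_{|f}$ is a UCQ perfect rewriting of it; $q_C$ is a cover-based JUCQ perfect rewriting if it is a perfect rewriting of $q$. Let $\mathrm{Aux}_f$ be fresh predicates, $U_f$ view names for $\mathrm{unf}(q^{\mathrm{ucq}}_{|f},\mathcal{M})$, $\mathcal{M}^{\mathrm{aux}}=\{\mathrm{Aux}_f(\vec x_f)\leftsquigarrow U_f(\vec x_f)\mid f\in C\}$, and $q^{\mathrm{aux}}_C(\vec x)\leftarrow\bigwedge_{f\in C}\mathrm{Aux}_f(\vec x_f)$. Split: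 if $m=L(\vec x)\leftsquigarrow U(\vec x)$ with $U$ a view for a Datalog query $(U(\vec x),\{U(\vec f_i(\vec x_i))\leftarrow B_i\mid1\le i\le n\})$, then $\mathrm{split}(m)=\{L(\vec f_i(\vec x_i))\leftsquigarrow B_i\}$; otherwise $\mathrm{split}(m)=\{m\}$; $\mathrm{split}(\mathcal{M})=\bigcup_m\mathrm{split}(m)$. Signature of $L(\vec f(\vec x))\leftsquigarrow V$ is $(L,\vec f)$. Wrap: for each signature $(L,\vec f)$ with mappings $\{L(\vec f(\vec v_i))\leftsquigarrow V_i(\vec v_i)\}_{i}$ of that signature, replace them by the single mapping $L(\vec f(\vec v))\leftsquigarrow W(\vec v)$, $W$ a fresh view for $(W(\vec v),\{W(\vec v_i)\leftarrow V_i(\vec v_i)\}_i)$; $\mathrm{wrap}(\mathcal{M})$ is the union over all signatures. Optimized unfolding: $\mathrm{unf}_{\mathrm{opt}}(q_C,\mathcal{M}):=\mathrm{unf}(q^{\mathrm{aux}}_C(\vec x),\mathrm{wrap}(\mathrm{split}(\mathcal{M}^{\mathrm{aux}})))$. *)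

theory Defs
  imports Main
begin

text \<open>Terms over variables built from function symbols; ground terms (values / individuals)
  built from database constants and function symbols.\<close>

datatype ('f,'v) trm = Var 'v | Fun 'f "('f,'v) trm list"

datatype ('f,'c) gtrm = GC 'c | GF 'f "('f,'c) gtrm list"

fun subst :: "('v \<Rightarrow> ('f,'w) trm) \<Rightarrow> ('f,'v) trm \<Rightarrow> ('f,'w) trm" where
  "subst \<sigma> (Var x) = \<sigma> x"
| "subst \<sigma> (Fun f ts) = Fun f (map (subst \<sigma>) ts)"

fun inst :: "('v \<Rightarrow> ('f,'c) gtrm) \<Rightarrow> ('f,'v) trm \<Rightarrow> ('f,'c) gtrm" where
  "inst \<nu> (Var x) = \<nu> x"
| "inst \<nu> (Fun f ts) = GF f (map (inst \<nu>) ts)"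

fun vars_t :: "('f,'v) trm \<Rightarrow> 'v list" where
  "vars_t (Var x) = [x]"
| "vars_t (Fun f ts) = concat (map vars_t ts)"

definition vars_l :: "('f,'v) trm list \<Rightarrow> 'v list" where
  "vars_l ts = concat (map vars_t ts)"

definition skel :: "('f,'v) trm list \<Rightarrow> ('f,unit) trm list" where
  "skel ts = map (subst (\<lambda>_. Var ())) ts"

fun num :: "nat \<Rightarrow> ('f,unit) trm \<Rightarrow> ('f,nat) trm \<times> nat"
and nums :: "nat \<Rightarrow> ('f,unit) trm list \<Rightarrow> ('f,nat) trm list \<times> nat" where
  "num n (Var _) = (Var n, Suc n)"
| "num n (Fun f ts) = (let (us, m) = nums n ts in (Fun f us, m))"
| "nums n [] = ([], n)"
| "nums n (t # ts) = (let (u, m) = num n t; (us, k) = nums m ts in (u # us, k))"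

definition unifier :: "('v \<Rightarrow> ('f,'v) trm) \<Rightarrow> (('f,'v) trm \<times> ('f,'v) trm) set \<Rightarrow> bool" where
  "unifier \<sigma> E \<longleftrightarrow> (\<forall>(s,t)\<in>E. subst \<sigma> s = subst \<sigma> t)"

definition is_mgu :: "('v \<Rightarrow> ('f,'v) trm) \<Rightarrow> (('f,'v) trm \<times> ('f,'v) trm) set \<Rightarrow> bool" where
  "is_mgu \<sigma> E \<longleftrightarrow> unifier \<sigma> E \<and>
     (\<forall>\<tau>. unifier \<tau> E \<longrightarrow> (\<exists>\<rho>. \<forall>x. \<tau> x = subst \<rho> (\<sigma> x)))"

section \<open>DL-Lite_R\<close>

datatype ('a,'r) pred = Concept 'a | Role 'r

fun arity :: "('a,'r) pred \<Rightarrow> nat" where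
  "arity (Concept _) = 1" | "arity (Role _) = 2"

datatype 'r role = P 'r | Inv 'r
datatype ('a,'r) basic = At 'a | Ex "'r role"
datatype ('a,'r) concept = CPos "('a,'r) basic" | CNeg "('a,'r) basic"
datatype 'r rexp = RPos "'r role" | RNeg "'r role"
datatype ('a,'r) axiom = CI "('a,'r) basic" "('a,'r) concept" | RI "'r role" "'r rexp"

type_synonym ('a,'r) tbox = "('a,'r) axiom set"
type_synonym ('a,'r,'f,'c) abox = "(('a,'r) pred \<times> ('f,'c) gtrm list) set"

type_synonym ('a,'r,'e) interp = "('a \<Rightarrow> 'e set) \<times> ('r \<Rightarrow> ('e \<times> 'e) set)"

fun role_ext :: "('a,'r,'e) interp \<Rightarrow> 'r role \<Rightarrow> ('e \<times> 'e) set" where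
  "role_ext I (P r) = snd I r"
| "role_ext I (Inv r) = converse (snd I r)"

fun basic_ext :: "('a,'r,'e) interp \<Rightarrow> ('a,'r) basic \<Rightarrow> 'e set" where
  "basic_ext I (At a) = fst I a"
| "basic_ext I (Ex R) = Domain (role_ext I R)"

fun concept_ext :: "('a,'r,'e) interp \<Rightarrow> ('a,'r) concept \<Rightarrow> 'e set" where
  "concept_ext I (CPos B) = basic_ext I B"
| "concept_ext I (CNeg B) = - basic_ext I B"

fun rexp_ext :: "('a,'r,'e) interp \<Rightarrow> 'r rexp \<Rightarrow> ('e \<times> 'e) set" where
  "rexp_ext I (RPos R) = role_ext I R"
| "rexp_ext I (RNeg R) = - role_ext I R"

fun sat_ax :: "('a,'r,'e) interp \<Rightarrow> ('a,'r) axiom \<Rightarrow> bool" where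
  "sat_ax I (CI B C) = (basic_ext I B \<subseteq> concept_ext I C)"
| "sat_ax I (RI R E) = (role_ext I R \<subseteq> rexp_ext I E)"

fun holds :: "('a,'r,'e) interp \<Rightarrow> ('a,'r) pred \<Rightarrow> 'e list \<Rightarrow> bool" where
  "holds I (Concept a) [d] = (d \<in> fst I a)"
| "holds I (Role r) [d, e] = ((d, e) \<in> snd I r)"
| "holds I _ _ = False"

text \<open>Models over the domain of individuals (interpreted by standard names, \<open>Inl\<close>)
  extended by countably many anonymous elements.\<close>
type_synonym ('f,'c) dom = "('f,'c) gtrm + nat"

definition is_model :: "('a,'r) tbox \<Rightarrow> ('a,'r,'f,'c) abox \<Rightarrow> ('a,'r,('f,'c) dom) interp \<Rightarrow> bool" where
  "is_model T A I \<longleftrightarrow> (\<forall>ax\<in>T. sat_ax I ax) \<and> (\<forall>(p,ts)\<in>A. holds I p (map Inl ts))"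

definition wf_abox :: "('a,'r,'f,'c) abox \<Rightarrow> bool" where
  "wf_abox A \<longleftrightarrow> (\<forall>(p,ts)\<in>A. length ts = arity p)"

definition ind :: "('a,'r,'f,'c) abox \<Rightarrow> ('f,'c) gtrm set" where
  "ind A = (\<Union>(p,ts)\<in>A. set ts)"

text \<open>A CQ \<open>q(xs) \<leftarrow> L\<^sub>1(v\<^sub>1),\<dots>,L\<^sub>n(v\<^sub>n)\<close>: answer variables and list of atoms.\<close>
type_synonym ('p,'v) cq = "'v list \<times> ('p \<times> 'v list) list"
type_synonym ('p,'v) ucq = "('p,'v) cq list"

definition wf_cq :: "(('a,'r) pred,'v) cq \<Rightarrow> bool" where
  "wf_cq q \<longleftrightarrow> (\<forall>(p,vs)\<in>set (snd q). length vs = arity p)"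

definition cert :: "'v list \<Rightarrow> (('a,'r) pred \<times> 'v list) set \<Rightarrow> ('a,'r) tbox
                    \<Rightarrow> ('a,'r,'f,'c) abox \<Rightarrow> ('f,'c) gtrm list set" where
  "cert xs B T A = {a. set a \<subseteq> ind A \<and>
      (\<forall>I. is_model T A I \<longrightarrow>
         (\<exists>\<nu>. map \<nu> xs = map Inl a \<and> (\<forall>(p,vs)\<in>B. holds I p (map \<nu> vs))))}"

definition cq_eval :: "('p,'v) cq \<Rightarrow> ('p \<times> ('f,'c) gtrm list) set \<Rightarrow> ('f,'c) gtrm list set" where
  "cq_eval q A = {map \<nu> (fst q) | \<nu>. \<forall>(p,vs)\<in>set (snd q). (p, map \<nu> vs) \<in> A}"

definition ucq_eval :: "('p,'v) ucq \<Rightarrow> ('p \<times> ('f,'c) gtrm list) set \<Rightarrow> ('f,'c) gtrm list set" where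
  "ucq_eval Q A = (\<Union>q\<in>set Q. cq_eval q A)"

text \<open>JUCQ \<open>q\<^sub>C(xs) \<leftarrow> \<And>\<^sub>f\<^sub>\<in>\<^sub>C R f (xf f)\<close>.\<close>
definition jucq_eval :: "'v list \<Rightarrow> 'fr set \<Rightarrow> ('fr \<Rightarrow> 'v list) \<Rightarrow> ('fr \<Rightarrow> ('p,'v) ucq)
                         \<Rightarrow> ('p \<times> ('f,'c) gtrm list) set \<Rightarrow> ('f,'c) gtrm list set" where
  "jucq_eval xs C xf R A = {map \<nu> xs | \<nu>. \<forall>f\<in>C. map \<nu> (xf f) \<in> ucq_eval (R f) A}"

definition ucq_perfect_rewriting ::
  "('a,'r) tbox \<Rightarrow> 'v list \<Rightarrow> (('a,'r) pred \<times> 'v list) set \<Rightarrow> (('a,'r) pred,'v) ucq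
   \<Rightarrow> ('f itself \<times> 'c itself) \<Rightarrow> bool" where
  "ucq_perfect_rewriting T xs B Q _ \<longleftrightarrow>
     (\<forall>A :: ('a,'r,'f,'c) abox. finite A \<and> wf_abox A \<longrightarrow> cert xs B T A = ucq_eval Q A)"

definition jucq_perfect_rewriting ::
  "('a,'r) tbox \<Rightarrow> (('a,'r) pred,'v) cq \<Rightarrow> (('a,'r) pred \<times> 'v list) set set
   \<Rightarrow> ((('a,'r) pred \<times> 'v list) set \<Rightarrow> 'v list)
   \<Rightarrow> ((('a,'r) pred \<times> 'v list) set \<Rightarrow> (('a,'r) pred,'v) ucq)
   \<Rightarrow> ('f itself \<times> 'c itself) \<Rightarrow> bool" where
  "jucq_perfect_rewriting T q C xf R _ \<longleftrightarrow>
     (\<forall>A :: ('a,'r,'f,'c) abox. finite A \<and> wf_abox A \<longrightarrow>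
        cert (fst q) (set (snd q)) T A = jucq_eval (fst q) C xf R A)"

definition is_cover :: "('p,'v) cq \<Rightarrow> ('p \<times> 'v list) set set \<Rightarrow> bool" where
  "is_cover q C \<longleftrightarrow> (\<forall>f\<in>C. f \<noteq> {} \<and> f \<subseteq> set (snd q)) \<and> \<Union>C = set (snd q) \<and>
                     (\<forall>f\<in>C. \<forall>g\<in>C. f \<subseteq> g \<longrightarrow> f = g)"

definition occurs_in :: "'v \<Rightarrow> ('p \<times> 'v list) set \<Rightarrow> bool" where
  "occurs_in v f \<longleftrightarrow> (\<exists>(p,vs)\<in>f. v \<in> set vs)"

text \<open>\<open>xs\<close> is (an enumeration of) the answer variables of the fragment query \<open>q|f\<close>.\<close>
definition frag_answer_vars :: "('p,'v) cq \<Rightarrow> ('p \<times> 'v list) set set \<Rightarrow> ('p \<times> 'v list) set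
                                \<Rightarrow> 'v list \<Rightarrow> bool" where
  "frag_answer_vars q C f xs \<longleftrightarrow> distinct xs \<and>
     set xs = {v \<in> set (fst q). occurs_in v f}
            \<union> {v. v \<notin> set (fst q) \<and> occurs_in v f \<and> (\<exists>g\<in>C. g \<noteq> f \<and> occurs_in v g)}"

text \<open>A view's extension is a function of the database instance \<open>'d\<close>.\<close>
type_synonym ('f,'c,'d) view = "'d \<Rightarrow> ('f,'c) gtrm list set"

text \<open>Mapping \<open>L(t) \<leadsto> V(z)\<close>.\<close>
type_synonym ('p,'f,'x,'c,'d) mapping = "'p \<times> ('f,'x) trm list \<times> ('f,'c,'d) view \<times> 'x list"

definition obda_spec :: "('a,'r) tbox \<Rightarrow> (('a,'r) pred,'f,'x,'c,'d) mapping set \<Rightarrow> bool" where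
  "obda_spec T M \<longleftrightarrow> finite T \<and> finite M \<and>
     (\<forall>(L,t,V,z)\<in>M. length t = arity L \<and> set (vars_l t) \<subseteq> set z)"

definition vabox :: "('p,'f,'x,'c,'d) mapping set \<Rightarrow> 'd \<Rightarrow> ('p \<times> ('f,'c) gtrm list) set" where
  "vabox M D = {(L, map (inst \<nu>) t) | L t V z \<nu>. (L,t,V,z) \<in> M \<and> map \<nu> z \<in> V D}"

text \<open>Datalog rule \<open>H(h) \<leftarrow> V\<^sub>1(t\<^sub>1),\<dots>,V\<^sub>n(t\<^sub>n)\<close> over views (non-recursive by construction);
  a Datalog query is a set of rules for its answer predicate.\<close>
type_synonym ('f,'y,'c,'d) rule = "('f,'y) trm list \<times> (('f,'c,'d) view \<times> ('f,'y) trm list) list"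

definition dl_eval :: "('f,'y,'c,'d) rule set \<Rightarrow> 'd \<Rightarrow> ('f,'c) gtrm list set" where
  "dl_eval Pi D = {map (inst \<nu>) h | h B \<nu>. (h,B) \<in> Pi \<and> (\<forall>(V,ts)\<in>set B. map (inst \<nu>) ts \<in> V D)}"

text \<open>Unfolding. Mapping variables of the i-th atom are renamed apart as \<open>Inr (i,z)\<close>.\<close>
definition unf :: "('p,'v) cq \<Rightarrow> ('p,'f,'x,'c,'d) mapping set \<Rightarrow> ('f,'v + nat \<times> 'x,'c,'d) rule set" where
  "unf q M = {(map (\<sigma> \<circ> Inl) (fst q),
               map (\<lambda>i. (fst (snd (snd (ms!i))), map (\<lambda>z. \<sigma> (Inr (i,z))) (snd (snd (snd (ms!i))))))
                   [0..<length (snd q)]) | ms \<sigma>.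
       length ms = length (snd q) \<and> set ms \<subseteq> M \<and>
       (\<forall>i<length (snd q). fst (ms!i) = fst (snd q ! i) \<and>
                           length (fst (snd (ms!i))) = length (snd (snd q ! i))) \<and>
       is_mgu \<sigma> {(Var (Inl v), subst (\<lambda>z. Var (Inr (i,z))) t) | i v t.
                    i < length (snd q) \<and> (v,t) \<in> set (zip (snd (snd q ! i)) (fst (snd (ms!i))))}}"

definition unf_ucq :: "('p,'v) ucq \<Rightarrow> ('p,'f,'x,'c,'d) mapping set \<Rightarrow> ('f,'v + nat \<times> 'x,'c,'d) rule set" where
  "unf_ucq Q M = (\<Union>q\<in>set Q. unf q M)"

text \<open>A mapping \<open>L(xs) \<leadsto> U(xs)\<close> whose view \<open>U\<close> is given by a Datalog query (set of rules).\<close>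
type_synonym ('p,'f,'y,'c,'d) dl_mapping = "'p \<times> 'y list \<times> ('f,'y,'c,'d) rule set"
type_synonym ('p,'f,'y,'c,'d) cq_mapping = "'p \<times> ('f,'y,'c,'d) rule"

definition split :: "('p,'f,'y,'c,'d) dl_mapping \<Rightarrow> ('p,'f,'y,'c,'d) cq_mapping set" where
  "split m = {(fst m, r) | r. r \<in> snd (snd m)}"

text \<open>Wrap: for each signature (predicate, skeleton of head terms) one mapping
  \<open>L(f(v)) \<leadsto> W(v)\<close> with fresh distinct variables \<open>v\<close> and fresh view \<open>W\<close> defined by the
  rules \<open>W(v\<^sub>i) \<leftarrow> B\<^sub>i\<close> for the mappings \<open>L(f(v\<^sub>i)) \<leadsto> B\<^sub>i\<close> of that signature.\<close>
definition wrap :: "('p,'f,'y,'c,'d) cq_mapping set \<Rightarrow> ('p,'f,nat,'c,'d) mapping set" where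
  "wrap G = {(L, fst (nums 0 sk),
              (\<lambda>D. dl_eval {(map Var (vars_l h), B) | h B. (L,(h,B)) \<in> G \<and> skel h = sk} D),
              [0..<snd (nums 0 sk)]) | L sk. \<exists>h B. (L,(h,B)) \<in> G \<and> skel h = sk}"

text \<open>The fresh predicates
  \<open>Aux\<^sub>f\<close> are the fragments \<open>f\<close> themselves; \<open>M\<^sup>a\<^sup>u\<^sup>x\<close> consists of \<open>Aux\<^sub>f(xf f) \<leadsto> U\<^sub>f(xf f)\<close>
  with \<open>U\<^sub>f\<close> the view for \<open>unf(R f, M)\<close>.\<close>
definition M_aux :: "'fr set \<Rightarrow> ('fr \<Rightarrow> 'v list) \<Rightarrow> ('fr \<Rightarrow> ('p,'v) ucq)
                     \<Rightarrow> ('p,'f,'x,'c,'d) mapping set \<Rightarrow> ('fr,'f,'v + nat \<times> 'x,'c,'d) dl_mapping set" where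
  "M_aux C xf R M = {(f, map Inl (xf f), unf_ucq (R f) M) | f. f \<in> C}"

definition q_aux :: "'v list \<Rightarrow> 'fr set \<Rightarrow> ('fr \<Rightarrow> 'v list) \<Rightarrow> ('fr,'v) cq" where
  "q_aux xs C xf = (xs, map (\<lambda>f. (f, xf f)) (SOME l. set l = C \<and> distinct l))"

definition unf_opt :: "'v list \<Rightarrow> 'fr set \<Rightarrow> ('fr \<Rightarrow> 'v list) \<Rightarrow> ('fr \<Rightarrow> ('p,'v) ucq)
                       \<Rightarrow> ('p,'f,'x,'c,'d) mapping set \<Rightarrow> ('f,'v + nat \<times> nat,'c,'d) rule set" where
  "unf_opt xs C xf R M = unf (q_aux xs C xf) (wrap (\<Union>m\<in>M_aux C xf R M. split m))"

end

theory Submission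
  imports Defs
begin

(* The unfolding of a single CQ is exact: a rule of unf(q, M) fires on D precisely for the
   matches of the atoms of q in the virtual ABox. Soundness is immediate from the unifier
   property of the mgu; completeness needs that any match, being a solution of the matching
   equations over ground terms, factors through their mgu, which unification provides.
   The optimized unfolding is the unfolding of the auxiliary CQ q^aux_C over
   wrap(split(M^aux)). Splitting and wrapping leave the virtual ABox unchanged, so for Aux_f it
   consists of the answers of unf(q^ucq_|f, M) on D, i.e. of q^ucq_|f over the virtual ABox of
   M; answering q^aux_C is therefore answering the JUCQ q_C. *)

lemma subst_subst: "subst \<rho> (subst \<sigma> t) = subst (subst \<rho> \<circ> \<sigma>) t"
  by (induction t) auto

lemma inst_subst: "inst \<eta> (subst \<sigma> t) = inst (inst \<eta> \<circ> \<sigma>) t"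
  by (induction t) auto

lemma subst_Var: "subst Var t = t"
  by (induction t) (auto simp: map_idI)

lemma subst_cong: "(\<And>x. x \<in> set (vars_t t) \<Longrightarrow> \<sigma> x = \<sigma>' x) \<Longrightarrow> subst \<sigma> t = subst \<sigma>' t"
  by (induction t) auto

lemma vars_t_subst: "vars_t (subst \<sigma> t) = concat (map (vars_t \<circ> \<sigma>) (vars_t t))"
proof (induction t)
  case (Fun f ts)
  then show ?case by (induction ts) auto
qed simp

lemma vars_t_shape: "vars_t (subst (\<lambda>_. Var ()) t) = map (\<lambda>_. ()) (vars_t t)"
  by (simp add: vars_t_subst comp_def)

lemma vars_l_skel: "vars_l (skel ts) = map (\<lambda>_. ()) (vars_l ts)"
  by (simp add: vars_l_def skel_def vars_t_shape map_concat comp_def)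

lemma subst_fun_upd_notin:
  assumes "x \<notin> set (vars_t t)"
  shows "subst (Var(x:=u)) t = t"
proof -
  have "subst (Var(x:=u)) t = subst Var t" by (rule subst_cong) (use assms in auto)
  then show ?thesis by (simp add: subst_Var)
qed

lemma map_eq_map_iff_zip:
  "length xs = length ys \<Longrightarrow> map f xs = map g ys \<longleftrightarrow> (\<forall>(a,b)\<in>set (zip xs ys). f a = g b)"
  by (induction xs ys rule: list_induct2) auto

lemma size_le_size_inst: "x \<in> set (vars_t u) \<Longrightarrow> size (\<eta> x) \<le> size (inst \<eta> u)"
proof (induction u)
  case (Fun f ts)
  then obtain t where "t \<in> set ts" "x \<in> set (vars_t t)" by auto
  with Fun.IH have "size (\<eta> x) \<le> size_list (size \<circ> inst \<eta>) ts"
    by (intro size_list_estimation') auto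
  then show ?case by simp
qed simp

lemma size_less_size_inst:
  assumes "x \<in> set (vars_t u)" and "u \<noteq> Var x"
  shows "size (\<eta> x) < size (inst \<eta> u)"
proof (cases u)
  case (Fun f ts)
  then obtain t where "t \<in> set ts" "x \<in> set (vars_t t)" using assms(1) by auto
  with size_le_size_inst[of x t \<eta>] have "size (\<eta> x) \<le> size_list (size \<circ> inst \<eta>) ts"
    by (intro size_list_estimation') auto
  then show ?thesis unfolding Fun by simp
qed (use assms in auto)

section \<open>Unification over ground terms\<close>

definition ground_unifier :: "('v \<Rightarrow> ('f,'c) gtrm) \<Rightarrow> (('f,'v) trm \<times> ('f,'v) trm) set \<Rightarrow> bool" where
  "ground_unifier \<eta> E \<longleftrightarrow> (\<forall>(s,t)\<in>E. inst \<eta> s = inst \<eta> t)"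

(* is_mgu only compares \<sigma> with unifiers over the same variables; completeness of the
   unfolding also needs every solution over ground terms to factor through \<sigma>. *)
definition ground_mgu :: "('v \<Rightarrow> ('f,'v) trm) \<Rightarrow> (('f,'v) trm \<times> ('f,'v) trm) set \<Rightarrow> 'c itself \<Rightarrow> bool" where
  "ground_mgu \<sigma> E _ \<longleftrightarrow> is_mgu \<sigma> E \<and>
     (\<forall>\<eta> :: 'v \<Rightarrow> ('f,'c) gtrm. ground_unifier \<eta> E \<longrightarrow> (\<exists>\<eta>'. \<forall>x. \<eta> x = inst \<eta>' (\<sigma> x)))"

lemma ground_mgu_cong:
  assumes "\<And>\<tau>. unifier \<tau> E \<longleftrightarrow> unifier \<tau> E'"
    and "\<And>\<eta> :: 'v \<Rightarrow> ('f,'c) gtrm. ground_unifier \<eta> E \<longleftrightarrow> ground_unifier \<eta> E'"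
  shows "ground_mgu \<sigma> E TYPE('c) \<longleftrightarrow> ground_mgu \<sigma> E' TYPE('c)"
  unfolding ground_mgu_def is_mgu_def assms ..

lemma ground_mgu_empty: "ground_mgu Var {} TYPE('c)"
  unfolding ground_mgu_def is_mgu_def unifier_def ground_unifier_def by (simp add: subst_Var) blast

lemma ground_mgu_insert_refl: "ground_mgu \<sigma> (insert (t,t) E) TYPE('c) \<longleftrightarrow> ground_mgu \<sigma> E TYPE('c)"
  by (rule ground_mgu_cong) (auto simp: unifier_def ground_unifier_def)

lemma ground_mgu_insert_swap:
  "ground_mgu \<sigma> (insert (t,s) E) TYPE('c) \<longleftrightarrow> ground_mgu \<sigma> (insert (s,t) E) TYPE('c)"
  by (rule ground_mgu_cong) (auto simp: unifier_def ground_unifier_def)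

lemma ground_mgu_insert_Fun:
  assumes "length ss = length us"
  shows "ground_mgu \<sigma> (insert (Fun f ss, Fun f us) E) TYPE('c) \<longleftrightarrow>
         ground_mgu \<sigma> (set (zip ss us) \<union> E) TYPE('c)"
  by (rule ground_mgu_cong)
    (auto simp: unifier_def ground_unifier_def assms map_eq_map_iff_zip)

lemma unifier_image_subst:
  "unifier \<tau> (map_prod (subst \<theta>) (subst \<theta>) ` E) \<longleftrightarrow> unifier (subst \<tau> \<circ> \<theta>) E"
  by (simp add: unifier_def subst_subst case_prod_beta)

lemma ground_unifier_image_subst:
  "ground_unifier \<eta> (map_prod (subst \<theta>) (subst \<theta>) ` E) \<longleftrightarrow> ground_unifier (inst \<eta> \<circ> \<theta>) E"
  by (simp add: ground_unifier_def inst_subst case_prod_beta)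

lemma unifier_insert_Var:
  "unifier \<tau> (insert (Var x, u) E) \<longleftrightarrow>
     \<tau> x = subst \<tau> u \<and> unifier \<tau> (map_prod (subst (Var(x:=u))) (subst (Var(x:=u))) ` E)"
proof (cases "\<tau> x = subst \<tau> u")
  case True
  then have "subst \<tau> \<circ> Var(x:=u) = \<tau>" by auto
  with True show ?thesis by (simp add: unifier_image_subst) (simp add: unifier_def)
qed (simp add: unifier_def)

lemma ground_unifier_insert_Var:
  "ground_unifier \<eta> (insert (Var x, u) E) \<longleftrightarrow>
     \<eta> x = inst \<eta> u \<and> ground_unifier \<eta> (map_prod (subst (Var(x:=u))) (subst (Var(x:=u))) ` E)"
proof (cases "\<eta> x = inst \<eta> u")
  case True
  then have "inst \<eta> \<circ> Var(x:=u) = \<eta>" by auto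
  with True show ?thesis by (simp add: ground_unifier_image_subst) (simp add: ground_unifier_def)
qed (simp add: ground_unifier_def)

lemma ground_unifier_insert_swap:
  "ground_unifier \<eta> (insert (t,s) E) \<longleftrightarrow> ground_unifier \<eta> (insert (s,t) E)"
  by (auto simp: ground_unifier_def)

lemma ground_mgu_insert_Var:
  fixes u :: "('f,'v) trm"
  assumes x: "x \<notin> set (vars_t u)"
    and mgu: "ground_mgu \<sigma> (map_prod (subst (Var(x:=u))) (subst (Var(x:=u))) ` E) TYPE('c)"
  shows "ground_mgu (subst \<sigma> \<circ> Var(x:=u)) (insert (Var x, u) E) TYPE('c)"
proof -
  let ?\<theta> = "Var(x:=u)" and ?\<sigma>' = "subst \<sigma> \<circ> Var(x:=u)"
  have "subst ?\<sigma>' u = subst \<sigma> u"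
    using subst_fun_upd_notin[OF x] by (simp add: subst_subst[symmetric])
  moreover have "unifier ?\<sigma>' E"
    using mgu by (simp add: ground_mgu_def is_mgu_def unifier_image_subst)
  ultimately have unif: "unifier ?\<sigma>' (insert (Var x, u) E)"
    by (simp add: unifier_def)
  have most_general: "\<exists>\<rho>. \<forall>y. \<tau> y = subst \<rho> (?\<sigma>' y)" if "unifier \<tau> (insert (Var x, u) E)" for \<tau>
  proof -
    from that have \<tau>x: "\<tau> x = subst \<tau> u" and "unifier \<tau> (map_prod (subst ?\<theta>) (subst ?\<theta>) ` E)"
      by (simp_all add: unifier_insert_Var)
    with mgu obtain \<rho> where "\<forall>y. \<tau> y = subst \<rho> (\<sigma> y)"
      unfolding ground_mgu_def is_mgu_def by blast
    then have "\<tau> = subst \<rho> \<circ> \<sigma>" by auto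
    moreover have "\<tau> = subst \<tau> \<circ> ?\<theta>" using \<tau>x by auto
    ultimately have "\<tau> y = subst \<rho> (?\<sigma>' y)" for y
      by (metis comp_apply subst_subst)
    then show ?thesis by blast
  qed
  have ground: "\<exists>\<eta>'. \<forall>y. \<eta> y = inst \<eta>' (?\<sigma>' y)"
    if "ground_unifier (\<eta> :: 'v \<Rightarrow> ('f,'c) gtrm) (insert (Var x, u) E)" for \<eta>
  proof -
    from that have \<eta>x: "\<eta> x = inst \<eta> u" and "ground_unifier \<eta> (map_prod (subst ?\<theta>) (subst ?\<theta>) ` E)"
      by (simp_all add: ground_unifier_insert_Var)
    with mgu obtain \<eta>' where "\<forall>y. \<eta> y = inst \<eta>' (\<sigma> y)"
      unfolding ground_mgu_def by blast
    then have "\<eta> = inst \<eta>' \<circ> \<sigma>" by auto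
    moreover have "\<eta> = inst \<eta> \<circ> ?\<theta>" using \<eta>x by auto
    ultimately have "\<eta> y = inst \<eta>' (?\<sigma>' y)" for y
      by (metis comp_apply inst_subst)
    then show ?thesis by blast
  qed
  show ?thesis
    unfolding ground_mgu_def is_mgu_def using unif most_general ground by blast
qed

definition eqs_vars :: "(('f,'v) trm \<times> ('f,'v) trm) set \<Rightarrow> 'v set" where
  "eqs_vars E = (\<Union>(s,t)\<in>E. set (vars_t s) \<union> set (vars_t t))"

definition eqs_size :: "(('f,'v) trm \<times> ('f,'v) trm) list \<Rightarrow> nat" where
  "eqs_size E = (\<Sum>(s,t)\<leftarrow>E. size s + size t)"

lemma finite_eqs_vars: "finite E \<Longrightarrow> finite (eqs_vars E)"
  by (auto simp: eqs_vars_def)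

lemma eqs_size_zip:
  "length ss = length us \<Longrightarrow> eqs_size (zip ss us) \<le> size_list size ss + size_list size us"
  by (induction ss us rule: list_induct2) (auto simp: eqs_size_def)

lemma eqs_vars_subst_fun_upd:
  "eqs_vars (map_prod (subst (Var(x:=u))) (subst (Var(x:=u))) ` E) \<subseteq> eqs_vars E - {x} \<union> set (vars_t u)"
  by (auto simp: eqs_vars_def vars_t_subst split: if_splits) blast+

(* Martelli-Montanari: elimination removes a variable, deletion and decomposition shrink the system. *)
lemma ground_mgu_exists_for_list:
  fixes \<eta> :: "'v \<Rightarrow> ('f,'c) gtrm" and E :: "(('f,'v) trm \<times> ('f,'v) trm) list"
  shows "ground_unifier \<eta> (set E) \<Longrightarrow> \<exists>\<sigma>. ground_mgu \<sigma> (set E) TYPE('c)"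
proof (induction E arbitrary: \<eta> rule: wf_induct[OF wf_measures[of "[\<lambda>E. card (eqs_vars (set E)), eqs_size]"]])
  case (1 E)
  show ?case
  proof (cases E)
    case Nil
    then show ?thesis using ground_mgu_empty by auto
  next
    case (Cons e E')
    obtain s t where E: "set E = insert (s,t) (set E')" and size_E: "eqs_size E = size s + size t + eqs_size E'"
      using Cons by (cases e) (auto simp: eqs_size_def)
    have fin: "finite (eqs_vars (set E))" by (simp add: finite_eqs_vars)
    have smaller: "\<exists>\<sigma>. ground_mgu \<sigma> (set E'') TYPE('c)"
      if "ground_unifier \<eta>'' (set E'')"
        and "eqs_vars (set E'') \<subset> eqs_vars (set E) \<or>
             eqs_vars (set E'') \<subseteq> eqs_vars (set E) \<and> eqs_size E'' < eqs_size E"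
      for E'' and \<eta>'' :: "'v \<Rightarrow> ('f,'c) gtrm"
    proof -
      have "card (eqs_vars (set E'')) < card (eqs_vars (set E)) \<or>
            card (eqs_vars (set E'')) \<le> card (eqs_vars (set E)) \<and> eqs_size E'' < eqs_size E"
        using that(2) fin psubset_card_mono card_mono by blast
      then have "(E'', E) \<in> measures [\<lambda>E. card (eqs_vars (set E)), eqs_size]"
        by auto
      with "1.IH" that(1) show ?thesis by blast
    qed
    have prems: "ground_unifier \<eta> (insert (s,t) (set E'))" using "1.prems" E by simp
    have vars_E': "eqs_vars (set E') \<subseteq> eqs_vars (set E)" using E by (auto simp: eqs_vars_def)
    consider (trivial) "s = t"
      | (eliminate) x u where "(s,t) = (Var x, u) \<or> (s,t) = (u, Var x)" "u \<noteq> Var x"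
      | (decompose) f ss g us where "s = Fun f ss" "t = Fun g us"
      by (cases s; cases t) auto
    then show ?thesis
    proof cases
      case trivial
      have "ground_unifier \<eta> (set E')" using prems by (simp add: ground_unifier_def)
      moreover have "eqs_size E' < eqs_size E" using size_E by (cases s) auto
      ultimately obtain \<sigma> where "ground_mgu \<sigma> (set E') TYPE('c)"
        using smaller vars_E' by blast
      then show ?thesis using trivial E ground_mgu_insert_refl by metis
    next
      case eliminate
      let ?E'' = "map (map_prod (subst (Var(x:=u))) (subst (Var(x:=u)))) E'"
      have "ground_unifier \<eta> (insert (Var x, u) (set E'))"
        using prems eliminate(1) ground_unifier_insert_swap by fastforce
      then have \<eta>x: "\<eta> x = inst \<eta> u" and "ground_unifier \<eta> (set ?E'')"
        by (simp_all add: ground_unifier_insert_Var)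
      moreover have x: "x \<notin> set (vars_t u)"
        using size_less_size_inst[of x u \<eta>] \<eta>x eliminate(2) by auto
      moreover have "eqs_vars (set ?E'') \<subset> eqs_vars (set E)"
      proof -
        have "x \<in> eqs_vars (set E)" "set (vars_t u) \<subseteq> eqs_vars (set E)"
          using E eliminate(1) by (auto simp: eqs_vars_def)
        with x vars_E' eqs_vars_subst_fun_upd[of x u "set E'"] show ?thesis by auto
      qed
      ultimately obtain \<sigma> where "ground_mgu \<sigma> (set ?E'') TYPE('c)"
        using smaller by blast
      then have "ground_mgu (subst \<sigma> \<circ> Var(x:=u)) (insert (Var x, u) (set E')) TYPE('c)"
        using ground_mgu_insert_Var[OF x] by simp
      then show ?thesis using E eliminate(1) ground_mgu_insert_swap by metis
    next
      case decompose
      with prems have f: "f = g" and args: "map (inst \<eta>) ss = map (inst \<eta>) us"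
        by (auto simp: ground_unifier_def)
      then have len: "length ss = length us" by (metis length_map)
      let ?E'' = "zip ss us @ E'"
      have "ground_unifier \<eta> (set ?E'')"
        using prems args len by (auto simp: ground_unifier_def map_eq_map_iff_zip)
      moreover have "eqs_vars (set ?E'') \<subseteq> eqs_vars (set E)"
        using vars_E' E decompose by (auto simp: eqs_vars_def dest: set_zip_leftD set_zip_rightD)
      moreover have "eqs_size ?E'' < eqs_size E"
        using eqs_size_zip[OF len] size_E decompose by (simp add: eqs_size_def)
      ultimately obtain \<sigma> where "ground_mgu \<sigma> (set ?E'') TYPE('c)"
        using smaller by blast
      then have "ground_mgu \<sigma> (insert (s,t) (set E')) TYPE('c)"
        using decompose f by (simp add: ground_mgu_insert_Fun[OF len])
      then show ?thesis using E by auto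
    qed
  qed
qed

lemma ground_mgu_exists:
  fixes \<eta> :: "'v \<Rightarrow> ('f,'c) gtrm" and E :: "(('f,'v) trm \<times> ('f,'v) trm) set"
  assumes "finite E" and "ground_unifier \<eta> E"
  shows "\<exists>\<sigma>. ground_mgu \<sigma> E TYPE('c)"
proof -
  obtain Es where "set Es = E" using finite_list[OF assms(1)] ..
  with ground_mgu_exists_for_list assms(2) show ?thesis by blast
qed

section \<open>Correctness of unfolding\<close>

definition unf_matches :: "('p,'v) cq \<Rightarrow> ('p,'f,'x,'c,'d) mapping set \<Rightarrow> ('p,'f,'x,'c,'d) mapping list \<Rightarrow> bool" where
  "unf_matches q M ms \<longleftrightarrow> length ms = length (snd q) \<and> set ms \<subseteq> M \<and>
     (\<forall>i<length (snd q). fst (ms!i) = fst (snd q ! i) \<and>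
                         length (fst (snd (ms!i))) = length (snd (snd q ! i)))"

definition unf_eqs :: "('p,'v) cq \<Rightarrow> ('p,'f,'x,'c,'d) mapping list
                       \<Rightarrow> (('f,'v + nat \<times> 'x) trm \<times> ('f,'v + nat \<times> 'x) trm) set" where
  "unf_eqs q ms = {(Var (Inl v), subst (\<lambda>z. Var (Inr (i,z))) t) | i v t.
                    i < length (snd q) \<and> (v,t) \<in> set (zip (snd (snd q ! i)) (fst (snd (ms!i))))}"

definition unf_body :: "('p,'v) cq \<Rightarrow> ('p,'f,'x,'c,'d) mapping list \<Rightarrow> ('v + nat \<times> 'x \<Rightarrow> ('f,'v + nat \<times> 'x) trm)
                        \<Rightarrow> (('f,'c,'d) view \<times> ('f,'v + nat \<times> 'x) trm list) list" where
  "unf_body q ms \<sigma> = map (\<lambda>i. (fst (snd (snd (ms!i))), map (\<lambda>z. \<sigma> (Inr (i,z))) (snd (snd (snd (ms!i))))))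
                         [0..<length (snd q)]"

lemma mem_unf_iff:
  "(h,B) \<in> unf q M \<longleftrightarrow>
     (\<exists>ms \<sigma>. unf_matches q M ms \<and> is_mgu \<sigma> (unf_eqs q ms) \<and>
             h = map (\<sigma> \<circ> Inl) (fst q) \<and> B = unf_body q ms \<sigma>)"
  unfolding unf_def unf_matches_def unf_eqs_def unf_body_def by blast

lemma unf_eqs_conv_UN:
  "unf_eqs q ms = (\<Union>i<length (snd q). (\<lambda>(v,t). (Var (Inl v), subst (\<lambda>z. Var (Inr (i,z))) t)) `
                     set (zip (snd (snd q ! i)) (fst (snd (ms!i)))))"
  unfolding unf_eqs_def by fast

lemma finite_unf_eqs: "finite (unf_eqs q ms)"
  by (simp add: unf_eqs_conv_UN)

lemma ground_unifier_unf_eqs: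
  assumes "unf_matches q M ms"
  shows "ground_unifier \<eta> (unf_eqs q ms) \<longleftrightarrow>
    (\<forall>i<length (snd q). map (\<eta> \<circ> Inl) (snd (snd q ! i)) = map (inst (\<lambda>z. \<eta> (Inr (i,z)))) (fst (snd (ms!i))))"
    (is "_ \<longleftrightarrow> ?rhs")
proof -
  have "ground_unifier \<eta> (unf_eqs q ms) \<longleftrightarrow>
    (\<forall>i\<in>{..<length (snd q)}. \<forall>(v,t)\<in>set (zip (snd (snd q ! i)) (fst (snd (ms!i)))).
        \<eta> (Inl v) = inst (\<lambda>z. \<eta> (Inr (i,z))) t)"
    by (simp add: unf_eqs_conv_UN ground_unifier_def inst_subst comp_def case_prod_beta)
  also have "\<dots> \<longleftrightarrow> ?rhs"
    using assms by (auto simp: unf_matches_def map_eq_map_iff_zip)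
  finally show ?thesis .
qed

lemma unf_sound:
  assumes "a \<in> dl_eval (unf q M) D"
  shows "a \<in> cq_eval q (vabox M D)"
proof -
  obtain ms \<sigma> \<eta> where m: "unf_matches q M ms" and mgu: "is_mgu \<sigma> (unf_eqs q ms)"
    and body: "\<forall>(V,ts)\<in>set (unf_body q ms \<sigma>). map (inst \<eta>) ts \<in> V D"
    and a: "a = map (inst \<eta> \<circ> \<sigma> \<circ> Inl) (fst q)"
    using assms unfolding dl_eval_def mem_unf_iff by auto
  define \<eta>' where "\<eta>' = inst \<eta> \<circ> \<sigma>"
  have "ground_unifier \<eta>' (unf_eqs q ms)"
    using mgu by (auto simp: is_mgu_def unifier_def ground_unifier_def \<eta>'_def inst_subst[symmetric])
  then have args: "map (\<eta>' \<circ> Inl) (snd (snd q ! i)) = map (inst (\<lambda>z. \<eta>' (Inr (i,z)))) (fst (snd (ms!i)))"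
    if "i < length (snd q)" for i
    using that by (simp add: ground_unifier_unf_eqs[OF m])
  have "(p, map (\<eta>' \<circ> Inl) vs) \<in> vabox M D" if pv: "(p,vs) \<in> set (snd q)" for p vs
  proof -
    obtain i where i: "i < length (snd q)" "snd q ! i = (p,vs)"
      using pv by (auto simp: in_set_conv_nth)
    obtain L t V z where msi: "ms!i = (L,t,V,z)" by (cases "ms!i") auto
    have "(L,t,V,z) \<in> M"
      using m i(1) msi nth_mem[of i ms] by (auto simp: unf_matches_def)
    moreover have "L = p"
      using m i msi by (force simp: unf_matches_def)
    moreover have "(V, map (\<lambda>z. \<sigma> (Inr (i,z))) z) \<in> set (unf_body q ms \<sigma>)"
      using i msi by (auto simp: unf_body_def image_iff intro!: bexI[of _ i])
    with body have "map (\<lambda>z. \<eta>' (Inr (i,z))) z \<in> V D"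
      by (fastforce simp: \<eta>'_def comp_def)
    ultimately have "(p, map (inst (\<lambda>z. \<eta>' (Inr (i,z)))) t) \<in> vabox M D"
      unfolding vabox_def by blast
    then show ?thesis using args[OF i(1)] i(2) msi by simp
  qed
  then show ?thesis unfolding cq_eval_def a \<eta>'_def by fastforce
qed

lemma unf_complete:
  fixes q :: "('p,'v) cq" and M :: "('p,'f,'x,'c,'d) mapping set"
  assumes "a \<in> cq_eval q (vabox M D)"
  shows "a \<in> dl_eval (unf q M) D"
proof -
  let ?n = "length (snd q)"
  obtain \<nu> where a: "a = map \<nu> (fst q)"
    and atoms: "\<forall>(p,vs)\<in>set (snd q). (p, map \<nu> vs) \<in> vabox M D"
    using assms unfolding cq_eval_def by blast
  have "\<exists>m \<mu>. m \<in> M \<and> fst m = fst (snd q ! i) \<and>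
          map \<nu> (snd (snd q ! i)) = map (inst \<mu>) (fst (snd m)) \<and>
          map \<mu> (snd (snd (snd m))) \<in> fst (snd (snd m)) D" if "i < ?n" for i
  proof -
    have "(fst (snd q ! i), map \<nu> (snd (snd q ! i))) \<in> vabox M D"
      using atoms nth_mem[OF that] by (cases "snd q ! i") auto
    then show ?thesis unfolding vabox_def by fastforce
  qed
  then obtain mf \<mu>f where choice: "\<forall>i<?n. mf i \<in> M \<and> fst (mf i) = fst (snd q ! i) \<and>
          map \<nu> (snd (snd q ! i)) = map (inst (\<mu>f i)) (fst (snd (mf i))) \<and>
          map (\<mu>f i) (snd (snd (snd (mf i)))) \<in> fst (snd (snd (mf i))) D"
    by metis
  define ms where "ms = map mf [0..<?n]"
  define \<eta> :: "'v + nat \<times> 'x \<Rightarrow> ('f,'c) gtrm" where "\<eta> = case_sum \<nu> (\<lambda>(i,z). \<mu>f i z)"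
  have m: "unf_matches q M ms"
    using choice by (auto simp: unf_matches_def ms_def) (metis length_map)
  have ground: "ground_unifier \<eta> (unf_eqs q ms)"
    unfolding ground_unifier_unf_eqs[OF m] using choice by (simp add: ms_def \<eta>_def comp_def)
  then obtain \<sigma> where "ground_mgu \<sigma> (unf_eqs q ms) TYPE('c)"
    using ground_mgu_exists finite_unf_eqs by blast
  then obtain \<eta>' where mgu: "is_mgu \<sigma> (unf_eqs q ms)" and \<eta>: "\<And>x. \<eta> x = inst \<eta>' (\<sigma> x)"
    using ground unfolding ground_mgu_def by blast
  have "(map (\<sigma> \<circ> Inl) (fst q), unf_body q ms \<sigma>) \<in> unf q M"
    using m mgu unfolding mem_unf_iff by blast
  moreover have "map (inst \<eta>') ts \<in> V D" if "(V,ts) \<in> set (unf_body q ms \<sigma>)" for V ts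
  proof -
    from that obtain i where i: "i < ?n" and "V = fst (snd (snd (mf i)))"
      and "ts = map (\<lambda>z. \<sigma> (Inr (i,z))) (snd (snd (snd (mf i))))"
      by (auto simp: unf_body_def ms_def)
    then show ?thesis using choice i by (simp add: \<eta>[symmetric] \<eta>_def comp_def)
  qed
  moreover have "map (inst \<eta>') (map (\<sigma> \<circ> Inl) (fst q)) = a"
    by (simp add: a \<eta>[symmetric] \<eta>_def comp_def)
  ultimately show ?thesis unfolding dl_eval_def by fastforce
qed

lemma dl_eval_unf: "dl_eval (unf q M) D = cq_eval q (vabox M D)"
  by (rule set_eqI) (meson unf_sound unf_complete)

lemma dl_eval_UN: "dl_eval (\<Union>x\<in>A. Pi x) D = (\<Union>x\<in>A. dl_eval (Pi x) D)"
  unfolding dl_eval_def by blast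

lemma dl_eval_unf_ucq: "dl_eval (unf_ucq Q M) D = ucq_eval Q (vabox M D)"
  unfolding unf_ucq_def ucq_eval_def dl_eval_UN dl_eval_unf ..

section \<open>Wrapping preserves the virtual ABox\<close>

lemma num_nums_shape:
  fixes s :: "('f,unit) trm" and ss :: "('f,unit) trm list"
  shows "num k s = (u, m) \<Longrightarrow> k \<le> m \<and> vars_t u = [k..<m] \<and> subst (\<lambda>_. Var ()) u = s"
    "nums k ss = (us, m) \<Longrightarrow> k \<le> m \<and> vars_l us = [k..<m] \<and> skel us = ss"
proof (induction k s and k ss arbitrary: u m and us m rule: num_nums.induct)
  case (4 n t ts)
  obtain u m' us' where t: "num n t = (u, m')" and ts: "nums m' ts = (us', m)" and us: "us = u # us'"
    using "4.prems" by (auto split: prod.splits)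
  have "[n..<m'] @ [m'..<m] = [n..<m]" if "n \<le> m'" "m' \<le> m"
    using that upt_add_eq_append[of n m' "m - m'"] by simp
  with "4.IH"(1)[OF t] "4.IH"(2)[OF t[symmetric] refl ts] show ?case
    by (auto simp: us vars_l_def skel_def)
qed (auto simp: vars_l_def skel_def split: prod.splits)

lemma inst_eq_if_same_shape:
  fixes u :: "('f,'x) trm" and t :: "('f,'y) trm"
  assumes "subst (\<lambda>_. Var ()) u = subst (\<lambda>_. Var ()) t"
    and "map \<mu> (vars_t u) = map \<nu> (vars_t t)"
  shows "inst \<mu> u = inst \<nu> t"
  using assms
proof (induction u arbitrary: t)
  case (Var x)
  then show ?case by (cases t) auto
next
  case (Fun f us)
  obtain ts where t: "t = Fun f ts" and shape: "skel us = skel ts"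
    using Fun.prems(1) by (cases t) (auto simp: skel_def)
  have vars: "map \<mu> (vars_l us) = map \<nu> (vars_l ts)"
    using Fun.prems(2) t by (simp add: vars_l_def)
  have "map (inst \<mu>) us = map (inst \<nu>) ts"
    using shape vars Fun.IH
  proof (induction us arbitrary: ts)
    case (Cons u us)
    obtain t ts' where ts: "ts = t # ts'" and shape_t: "subst (\<lambda>_. Var ()) u = subst (\<lambda>_. Var ()) t"
      and shape_ts': "skel us = skel ts'"
      using Cons.prems(1) by (cases ts) (auto simp: skel_def)
    have "length (vars_t u) = length (vars_t t)"
      using arg_cong[OF shape_t, of "length \<circ> vars_t"] by (simp add: vars_t_shape)
    then have "map \<mu> (vars_t u) = map \<nu> (vars_t t)" and "map \<mu> (vars_l us) = map \<nu> (vars_l ts')"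
      using Cons.prems(2) by (auto simp: ts vars_l_def)
    with shape_t shape_ts' Cons.IH Cons.prems(3) show ?case
      by (simp add: ts)
  qed (simp add: skel_def)
  then show ?case using t by simp
qed

lemma map_inst_eq_if_same_shape:
  fixes us :: "('f,'x) trm list" and ts :: "('f,'y) trm list"
  assumes "skel us = skel ts" and "map \<mu> (vars_l us) = map \<nu> (vars_l ts)"
  shows "map (inst \<mu>) us = map (inst \<nu>) ts"
  using inst_eq_if_same_shape[of "Fun undefined us" "Fun undefined ts" \<mu> \<nu>] assms
  by (simp add: skel_def vars_l_def)

lemma nums_skel:
  assumes "nums 0 (skel h) = (us, n)"
  shows "n = length (vars_l h)"
    and "map \<mu> [0..<n] = map \<nu> (vars_l h) \<Longrightarrow> map (inst \<mu>) us = map (inst \<nu>) h"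
proof -
  from num_nums_shape(2)[OF assms] have vars: "vars_l us = [0..<n]" and shape: "skel us = skel h"
    by auto
  show "n = length (vars_l h)"
    using arg_cong[OF shape, of "length \<circ> vars_l"] vars by (simp add: vars_l_skel)
  show "map \<mu> [0..<n] = map \<nu> (vars_l h) \<Longrightarrow> map (inst \<mu>) us = map (inst \<nu>) h"
    using map_inst_eq_if_same_shape[OF shape] vars by simp
qed

lemma vabox_wrap:
  "vabox (wrap G) D =
     {(L, map (inst \<nu>) h) | L h B \<nu>. (L,(h,B)) \<in> G \<and> (\<forall>(V,ts)\<in>set B. map (inst \<nu>) ts \<in> V D)}"
proof (intro set_eqI iffI)
  fix e assume "e \<in> vabox (wrap G) D"
  then obtain L sk \<mu> where e: "e = (L, map (inst \<mu>) (fst (nums 0 sk)))"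
    and "map \<mu> [0..<snd (nums 0 sk)] \<in> dl_eval {(map Var (vars_l h), B) | h B. (L,(h,B)) \<in> G \<and> skel h = sk} D"
    unfolding vabox_def wrap_def by blast
  then obtain h B \<nu> where G: "(L,(h,B)) \<in> G" and sk: "skel h = sk"
    and body: "\<forall>(V,ts)\<in>set B. map (inst \<nu>) ts \<in> V D"
    and args: "map \<mu> [0..<snd (nums 0 sk)] = map \<nu> (vars_l h)"
    unfolding dl_eval_def by auto
  have "map (inst \<mu>) (fst (nums 0 sk)) = map (inst \<nu>) h"
    using nums_skel(2)[of h, OF prod.collapse[symmetric]] args sk by simp
  with e G body show "e \<in> {(L, map (inst \<nu>) h) | L h B \<nu>. (L,(h,B)) \<in> G \<and> (\<forall>(V,ts)\<in>set B. map (inst \<nu>) ts \<in> V D)}"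
    by auto
next
  fix e assume "e \<in> {(L, map (inst \<nu>) h) | L h B \<nu>. (L,(h,B)) \<in> G \<and> (\<forall>(V,ts)\<in>set B. map (inst \<nu>) ts \<in> V D)}"
  then obtain L h B \<nu> where e: "e = (L, map (inst \<nu>) h)" and G: "(L,(h,B)) \<in> G"
    and body: "\<forall>(V,ts)\<in>set B. map (inst \<nu>) ts \<in> V D" by blast
  obtain us n where ns: "nums 0 (skel h) = (us, n)" by fastforce
  define \<mu> where "\<mu> i = \<nu> (vars_l h ! i)" for i
  have args: "map \<mu> [0..<n] = map \<nu> (vars_l h)"
    unfolding \<mu>_def nums_skel(1)[OF ns] by (rule nth_equalityI) auto
  let ?W = "\<lambda>D. dl_eval {(map Var (vars_l h'), B') | h' B'. (L,(h',B')) \<in> G \<and> skel h' = skel h} D"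
  have "(L, fst (nums 0 (skel h)), ?W, [0..<snd (nums 0 (skel h))]) \<in> wrap G"
    unfolding wrap_def using G by blast
  then have "(L, us, ?W, [0..<n]) \<in> wrap G" using ns by simp
  moreover have "map (inst \<nu>) (map Var (vars_l h)) \<in> ?W D"
    unfolding dl_eval_def using G body by blast
  with args have "map \<mu> [0..<n] \<in> ?W D" by (simp add: comp_def)
  ultimately have "(L, map (inst \<mu>) us) \<in> vabox (wrap G) D"
    unfolding vabox_def by blast
  then show "e \<in> vabox (wrap G) D"
    using e nums_skel(2)[OF ns args] by simp
qed

section \<open>Optimized unfolding\<close>

lemma vabox_wrap_split_M_aux:
  "(f,a) \<in> vabox (wrap (\<Union>m\<in>M_aux C xf R M. split m)) D \<longleftrightarrow> f \<in> C \<and> a \<in> ucq_eval (R f) (vabox M D)"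
proof -
  let ?G = "\<Union>m\<in>M_aux C xf R M. split m"
  have G: "(f,(h,B)) \<in> ?G \<longleftrightarrow> f \<in> C \<and> (h,B) \<in> unf_ucq (R f) M" for h B
    unfolding M_aux_def Defs.split_def by auto
  have "(f,a) \<in> vabox (wrap ?G) D \<longleftrightarrow>
     (\<exists>h B \<nu>. (f,(h,B)) \<in> ?G \<and> (\<forall>(V,ts)\<in>set B. map (inst \<nu>) ts \<in> V D) \<and> a = map (inst \<nu>) h)"
    unfolding vabox_wrap by blast
  also have "\<dots> \<longleftrightarrow> f \<in> C \<and> a \<in> dl_eval (unf_ucq (R f) M) D"
    unfolding G dl_eval_def by blast
  finally show ?thesis unfolding dl_eval_unf_ucq .
qed

lemma dl_eval_unf_opt:
  assumes "finite C"
  shows "dl_eval (unf_opt xs C xf R M) D = jucq_eval xs C xf R (vabox M D)"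
proof -
  let ?G = "\<Union>m\<in>M_aux C xf R M. split m"
  have "\<exists>l. set l = C \<and> distinct l" using finite_distinct_list[OF assms] .
  then have C: "set (SOME l. set l = C \<and> distinct l) = C" by (rule someI2_ex) blast
  have "dl_eval (unf_opt xs C xf R M) D = cq_eval (q_aux xs C xf) (vabox (wrap ?G) D)"
    unfolding unf_opt_def dl_eval_unf ..
  also have "\<dots> = jucq_eval xs C xf R (vabox M D)"
  proof -
    have "(\<forall>(p,vs)\<in>set (snd (q_aux xs C xf)). (p, map \<nu> vs) \<in> vabox (wrap ?G) D) \<longleftrightarrow>
          (\<forall>f\<in>C. map \<nu> (xf f) \<in> ucq_eval (R f) (vabox M D))" for \<nu>
      unfolding q_aux_def by (simp add: vabox_wrap_split_M_aux C)
    then show ?thesis unfolding cq_eval_def jucq_eval_def by (simp add: q_aux_def)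
  qed
  finally show ?thesis .
qed

theorem theorem4:
  fixes T :: "('a,'r) tbox"
    and M :: "(('a,'r) pred,'f,'x,'c,'d) mapping set"
    and q :: "(('a,'r) pred,'v) cq"
    and C :: "(('a,'r) pred \<times> 'v list) set set"
    and xf :: "(('a,'r) pred \<times> 'v list) set \<Rightarrow> 'v list"
    and R :: "(('a,'r) pred \<times> 'v list) set \<Rightarrow> (('a,'r) pred,'v) ucq"
    and D :: 'd
  assumes "obda_spec T M"
    and "wf_cq q"
    and "is_cover q C"
    and "\<forall>f\<in>C. frag_answer_vars q C f (xf f)"
    and "\<forall>f\<in>C. ucq_perfect_rewriting T (xf f) f (R f) (TYPE('f), TYPE('c))"
    and "jucq_perfect_rewriting T q C xf R (TYPE('f), TYPE('c))"
  shows "dl_eval (unf_opt (fst q) C xf R M) D = jucq_eval (fst q) C xf R (vabox M D)"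
proof -
  (* Only finiteness of the cover is used: unfolding is exact regardless of the TBox, so q_C
     need not be a perfect rewriting for its optimized unfolding to be an M-translation. *)
  have "C \<subseteq> Pow (set (snd q))" using assms(3) unfolding is_cover_def by blast
  then have "finite C" by (rule finite_subset) simp
  then show ?thesis by (rule dl_eval_unf_opt)
qed

end
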